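(* For any node $V_j\in\mathrm{indir}(A,Y,\mathcal{G})$ and any $P\in\mathcal{M}(\mathcal{G})$, $$E_P[J_{P,\mathcal{G}}\mid V_j,\mathrm{pa}_{\mathcal{G}}(V_j)]-E_P[J_{P,\mathcal{G}}\mid\mathrm{pa}_{\mathcal{G}}(V_j)]=0.$$
   Context: $\mathcal{G}$ is a DAG with vertex set $\mathbf{V}$, $A,Y$ distinct vertices, $A$ a discrete point intervention. $\mathcal{M}(\mathcal{G})$ is the set of laws satisfying the local Markov property w.r.t. $\mathcal{G}$. $\mathrm{pa}_{\mathcal{G}}(V)$ and $\mathrm{an}_{\mathcal{G}}(V)$ denote the parents and ancestors of $V$. $\mathrm{indir}(A,Y,\mathcal{G})=\{V\in\mathbf{V}:V\in\mathrm{an}_{\mathcal{G}}(A)\setminus\{A\}\text{ and all causal paths between }V\text{ and }Y\text{ intersect }A\}$. $J_{P,\mathcal{G}}=J_{P,a,\mathcal{G}}=\frac{I_a(A)Y}{P(A=a\mid\mathrm{pa}_{\mathcal{G}}(A))}$. *)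

theory Defs
  imports "HOL-Probability.Probability"
begin

definition pa :: "('v \<times> 'v) set \<Rightarrow> 'v \<Rightarrow> 'v set" where
  "pa E v = {u. (u, v) \<in> E}"

definition an :: "('v \<times> 'v) set \<Rightarrow> 'v \<Rightarrow> 'v set" where
  "an E v = {u. (u, v) \<in> E\<^sup>*}"

definition de :: "('v \<times> 'v) set \<Rightarrow> 'v \<Rightarrow> 'v set" where
  "de E v = {w. (v, w) \<in> E\<^sup>*}"

definition nd :: "'v set \<Rightarrow> ('v \<times> 'v) set \<Rightarrow> 'v \<Rightarrow> 'v set" where
  "nd V E v = V - de E v"

definition is_dag :: "'v set \<Rightarrow> ('v \<times> 'v) set \<Rightarrow> bool" where
  "is_dag V E \<longleftrightarrow> finite V \<and> E \<subseteq> V \<times> V \<and> acyclic E"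

text \<open>indir(A,Y,G): proper ancestors v of A such that every causal (directed) path from
  v to Y passes through A, i.e. Y is not reachable from v by a directed path avoiding A.\<close>
definition indir :: "'v set \<Rightarrow> ('v \<times> 'v) set \<Rightarrow> 'v \<Rightarrow> 'v \<Rightarrow> 'v set" where
  "indir V E A Y = {v \<in> V. v \<in> an E A - {A} \<and> (v, Y) \<notin> (Restr E (V - {A}))\<^sup>*}"

definition gen :: "'a measure \<Rightarrow> ('v \<Rightarrow> 'a \<Rightarrow> real) \<Rightarrow> 'v set \<Rightarrow> 'a measure" where
  "gen M X S = sigma (space M) (\<Union>v\<in>S. {X v -` B \<inter> space M | B. B \<in> sets borel})"

text \<open>Local Markov property: each X v is conditionally independent of its
  non-descendants given its parents, expressed as
  P(X v \<in> B | X_nd(v)) = P(X v \<in> B | X_pa(v)) a.s. for all Borel B.\<close>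
definition local_markov ::
  "'a measure \<Rightarrow> 'v set \<Rightarrow> ('v \<times> 'v) set \<Rightarrow> ('v \<Rightarrow> 'a \<Rightarrow> real) \<Rightarrow> bool" where
  "local_markov M V E X \<longleftrightarrow>
     (\<forall>v\<in>V. \<forall>B\<in>sets borel.
        AE \<omega> in M. real_cond_exp M (gen M X (nd V E v)) (\<lambda>\<omega>. indicator B (X v \<omega>)) \<omega>
                   = real_cond_exp M (gen M X (pa E v)) (\<lambda>\<omega>. indicator B (X v \<omega>)) \<omega>)"

definition propensity :: "'a measure \<Rightarrow> ('v \<times> 'v) set \<Rightarrow> ('v \<Rightarrow> 'a \<Rightarrow> real) \<Rightarrow> 'v \<Rightarrow> real \<Rightarrow> 'a \<Rightarrow> real" where
  "propensity M E X A a = real_cond_exp M (gen M X (pa E A)) (\<lambda>\<omega>. indicator {a} (X A \<omega>))"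

definition J_fun :: "'a measure \<Rightarrow> ('v \<times> 'v) set \<Rightarrow> ('v \<Rightarrow> 'a \<Rightarrow> real) \<Rightarrow> 'v \<Rightarrow> real \<Rightarrow> 'v \<Rightarrow> 'a \<Rightarrow> real" where
  "J_fun M E X A a Y = (\<lambda>\<omega>. indicator {a} (X A \<omega>) * X Y \<omega> / propensity M E X A a \<omega>)"

end

theory Submission
  imports Defs
begin

text \<open>
  Let T be the set of vertices reachable from V_j by directed paths avoiding A; then A and Y
  lie outside T. For every ancestral set P, the conditional expectation of J given X_P
  (of I_a(A) Y instead, once A \<in> P) has a version depending on X_(P - T) only. This is
  proved by removing the vertices of V one at a time, each having all its parents in the
  remaining set P. Removing a vertex of T costs nothing, since the version already ignores it.
  A vertex v \<notin> T \<union> {A} has no parent in T, so by the local Markov property at v the expectation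
  given X_P equals the one given X_(P - T). When A is removed, the version restricted to
  the event A = a no longer involves X_A, and the weight 1 / P(A = a | pa(A)) cancels against
  P(A = a | X_P) = P(A = a | pa(A)).

  Applied to P = {V_j} \<union> nd(V_j), this makes E[J | V_j, nd(V_j)] a function \<phi> of X_nd(V_j).
  By the tower property the two conditional expectations in the claim are E[\<phi> | V_j, pa(V_j)]
  and E[\<phi> | pa(V_j)], and these agree by the local Markov property at V_j.
\<close>

section \<open>Conditional expectations and conditional independence\<close>

lemma integrable_mult_bounded:
  fixes f g :: "'a \<Rightarrow> real" and B :: real
  assumes "integrable M f" "g \<in> borel_measurable M" "AE x in M. \<bar>g x\<bar> \<le> B"
  shows "integrable M (\<lambda>x. g x * f x)"
proof (rule Bochner_Integration.integrable_bound[where f="\<lambda>x. B * f x"])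
  show "integrable M (\<lambda>x. B * f x)" using assms(1) by simp
  show "(\<lambda>x. g x * f x) \<in> borel_measurable M" using assms(1,2) by measurable
  show "AE x in M. norm (g x * f x) \<le> norm (B * f x)"
    using assms(3) by eventually_elim (auto simp: abs_mult intro!: mult_right_mono)
qed

lemma Int_stable_Int_pairs:
  assumes "Int_stable K" "Int_stable L"
  shows "Int_stable {B \<inter> D | B D. B \<in> K \<and> D \<in> L}"
proof (rule Int_stableI)
  fix S S' assume "S \<in> {B \<inter> D | B D. B \<in> K \<and> D \<in> L}" "S' \<in> {B \<inter> D | B D. B \<in> K \<and> D \<in> L}"
  then obtain B D B' D' where S: "S = B \<inter> D" "S' = B' \<inter> D'"
    and BK: "B \<in> K" "B' \<in> K" and DL: "D \<in> L" "D' \<in> L"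
    by blast
  have "B \<inter> B' \<in> K" "D \<inter> D' \<in> L"
    using assms BK DL unfolding Int_stable_def by blast+
  moreover have "S \<inter> S' = (B \<inter> B') \<inter> (D \<inter> D')"
    using S by blast
  ultimately show "S \<inter> S' \<in> {B \<inter> D | B D. B \<in> K \<and> D \<in> L}"
    by blast
qed

context prob_space
begin

lemma sigma_finite_subalgebra_of_subalgebra:
  "subalgebra M H \<Longrightarrow> sigma_finite_subalgebra M H"
  by (simp add: finite_measure_axioms finite_measure_subalgebra.intro
      finite_measure_subalgebra_axioms_def finite_measure_subalgebra_is_sigma_finite)

lemma integrable_indicator_prob: "C \<in> sets M \<Longrightarrow> integrable M (indicator C :: 'a \<Rightarrow> real)"
  by (simp add: less_top[symmetric])

lemma real_cond_exp_indicator_abs_le_1: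
  assumes "subalgebra M H" "C \<in> sets M"
  shows "AE x in M. \<bar>real_cond_exp M H (indicator C) x\<bar> \<le> 1"
proof -
  interpret H: sigma_finite_subalgebra M H
    using assms(1) by (rule sigma_finite_subalgebra_of_subalgebra)
  have "AE x in M. real_cond_exp M H (indicator C) x \<ge> 0"
    by (rule H.real_cond_exp_ge_c) (auto simp: assms(2) integrable_indicator_prob)
  moreover have "AE x in M. real_cond_exp M H (indicator C) x \<le> 1"
    by (rule H.real_cond_exp_le_c) (auto simp: assms(2) integrable_indicator_prob split: split_indicator)
  ultimately show ?thesis by eventually_elim auto
qed

lemma real_cond_exp_nested_eq:
  assumes G: "subalgebra M G" and HG: "subalgebra G H" and f: "integrable M f"
    and \<phi>: "AE x in M. real_cond_exp M G f x = \<phi> x" "\<phi> \<in> borel_measurable M"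
  shows "AE x in M. real_cond_exp M H f x = real_cond_exp M H \<phi> x"
proof -
  have "subalgebra M H" using G HG by (auto simp: subalgebra_def)
  then interpret H: sigma_finite_subalgebra M H by (rule sigma_finite_subalgebra_of_subalgebra)
  have "AE x in M. real_cond_exp M H (real_cond_exp M G f) x = real_cond_exp M H f x"
    by (rule H.real_cond_exp_nested_subalg[OF G HG f])
  moreover have "AE x in M. real_cond_exp M H (real_cond_exp M G f) x = real_cond_exp M H \<phi> x"
    by (rule H.real_cond_exp_cong[OF \<phi>(1) borel_measurable_cond_exp2 \<phi>(2)])
  ultimately show ?thesis by eventually_elim simp
qed

lemma integral_mult_real_cond_exp_indicator:
  assumes H: "subalgebra M H" and f: "integrable M f" and C: "C \<in> sets M"
  shows "(\<integral>x. f x * real_cond_exp M H (indicator C) x \<partial>M)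
       = (\<integral>x. indicator C x * real_cond_exp M H f x \<partial>M)"
proof -
  interpret H: sigma_finite_subalgebra M H
    using H by (rule sigma_finite_subalgebra_of_subalgebra)
  have [measurable]: "f \<in> borel_measurable M" "C \<in> sets M" using f C by auto
  have "(\<integral>x. real_cond_exp M H (indicator C) x * f x \<partial>M)
      = (\<integral>x. real_cond_exp M H (indicator C) x * real_cond_exp M H f x \<partial>M)"
    using f integrable_mult_bounded[OF f _ real_cond_exp_indicator_abs_le_1[OF H C]]
    by (intro H.real_cond_exp_intg(2)[symmetric]) auto
  also have "\<dots> = (\<integral>x. real_cond_exp M H f x * real_cond_exp M H (indicator C) x \<partial>M)"
    by (simp add: mult.commute)
  also have "\<dots> = (\<integral>x. real_cond_exp M H f x * indicator C x \<partial>M)"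
    using integrable_real_mult_indicator[OF C H.real_cond_exp_int(1)[OF f]]
    by (intro H.real_cond_exp_intg(2)) auto
  finally show ?thesis by (simp add: mult.commute)
qed

text \<open>
  For H \<subseteq> G, E[f | G] = E[f | H] iff f is orthogonal to all 1_C - E[1_C | H] with C \<in> G.
  Unlike the equation itself, this condition is linear in f and stable under dominated limits,
  so it passes from indicators of generators to all integrable measurable f.
\<close>

definition centred_indicator :: "'a measure \<Rightarrow> 'a set \<Rightarrow> 'a \<Rightarrow> real" where
  "centred_indicator H C x = indicator C x - real_cond_exp M H (indicator C) x"

definition orth_centred :: "'a measure \<Rightarrow> 'a measure \<Rightarrow> ('a \<Rightarrow> real) \<Rightarrow> bool" where
  "orth_centred G H f \<longleftrightarrow> (\<forall>C\<in>sets G. (\<integral>x. f x * centred_indicator H C x \<partial>M) = 0)"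

lemma borel_measurable_centred_indicator [measurable]:
  "C \<in> sets M \<Longrightarrow> centred_indicator H C \<in> borel_measurable M"
  unfolding centred_indicator_def
  by (intro borel_measurable_diff borel_measurable_indicator borel_measurable_cond_exp2)

lemma centred_indicator_abs_le_2:
  assumes "subalgebra M H" "C \<in> sets M"
  shows "AE x in M. \<bar>centred_indicator H C x\<bar> \<le> 2"
  using real_cond_exp_indicator_abs_le_1[OF assms]
  by eventually_elim (auto simp: centred_indicator_def split: split_indicator)

lemma integrable_mult_centred_indicator:
  assumes "subalgebra M H" "C \<in> sets M" "integrable M f"
  shows "integrable M (\<lambda>x. f x * centred_indicator H C x)"
  using integrable_mult_bounded[OF assms(3) _ centred_indicator_abs_le_2[OF assms(1,2)]] assms(2)
  by (simp add: mult.commute)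

lemma integral_mult_centred_indicator:
  assumes H: "subalgebra M H" and f: "integrable M f" and C: "C \<in> sets M"
  shows "(\<integral>x. f x * centred_indicator H C x \<partial>M)
       = (\<integral>x\<in>C. f x \<partial>M) - (\<integral>x\<in>C. real_cond_exp M H f x \<partial>M)"
proof -
  have "integrable M (\<lambda>x. f x * real_cond_exp M H (indicator C) x)"
    using integrable_mult_bounded[OF f _ real_cond_exp_indicator_abs_le_1[OF H C]]
    by (simp add: mult.commute)
  then have "(\<integral>x. f x * centred_indicator H C x \<partial>M)
      = (\<integral>x. f x * indicator C x \<partial>M) - (\<integral>x. f x * real_cond_exp M H (indicator C) x \<partial>M)"
    using integrable_real_mult_indicator[OF C f]
    by (simp add: centred_indicator_def right_diff_distrib)
  then show ?thesis
    using integral_mult_real_cond_exp_indicator[OF H f C]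
    by (simp add: set_lebesgue_integral_def mult.commute)
qed

lemma orth_centred_iff_real_cond_exp_eq:
  assumes G: "subalgebra M G" and H: "subalgebra M H" and HG: "sets H \<subseteq> sets G"
    and f: "integrable M f"
  shows "orth_centred G H f \<longleftrightarrow> (AE x in M. real_cond_exp M G f x = real_cond_exp M H f x)"
proof -
  interpret G: sigma_finite_subalgebra M G
    using G by (rule sigma_finite_subalgebra_of_subalgebra)
  interpret H: sigma_finite_subalgebra M H
    using H by (rule sigma_finite_subalgebra_of_subalgebra)
  have CM: "C \<in> sets M" if "C \<in> sets G" for C
    using that G by (auto simp: subalgebra_def)
  have HsubG: "subalgebra G H"
    using G H HG by (auto simp: subalgebra_def)
  have orth_iff: "orth_centred G H f \<longleftrightarrow>
      (\<forall>C\<in>sets G. (\<integral>x\<in>C. f x \<partial>M) = (\<integral>x\<in>C. real_cond_exp M H f x \<partial>M))"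
    by (simp add: orth_centred_def integral_mult_centred_indicator[OF H f CM])
  show ?thesis
  proof
    assume "orth_centred G H f"
    then show "AE x in M. real_cond_exp M G f x = real_cond_exp M H f x"
      unfolding orth_iff
      by (intro G.real_cond_exp_charact H.real_cond_exp_int(1) f
          measurable_from_subalg[OF HsubG borel_measurable_cond_exp]) auto
  next
    assume ae: "AE x in M. real_cond_exp M G f x = real_cond_exp M H f x"
    have "(\<integral>x\<in>C. f x \<partial>M) = (\<integral>x\<in>C. real_cond_exp M H f x \<partial>M)" if "C \<in> sets G" for C
    proof -
      have "(\<integral>x\<in>C. f x \<partial>M) = (\<integral>x\<in>C. real_cond_exp M G f x \<partial>M)"
        using that by (rule G.real_cond_exp_intA[OF f])
      also have "\<dots> = (\<integral>x\<in>C. real_cond_exp M H f x \<partial>M)"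
        using ae CM[OF that] unfolding set_lebesgue_integral_def
        by (intro integral_cong_AE) auto
      finally show ?thesis .
    qed
    then show "orth_centred G H f" unfolding orth_iff by blast
  qed
qed

context
  fixes G H :: "'a measure"
  assumes G: "subalgebra M G" and H: "subalgebra M H" and HG: "sets H \<subseteq> sets G"
begin

lemma orth_centred_cong:
  assumes "\<And>x. x \<in> space M \<Longrightarrow> f x = g x" "orth_centred G H f"
  shows "orth_centred G H g"
  using assms unfolding orth_centred_def
  by (metis (no_types, lifting) Bochner_Integration.integral_cong)

lemma orth_centred_cmult: "orth_centred G H f \<Longrightarrow> orth_centred G H (\<lambda>x. c * f x)"
  unfolding orth_centred_def by (simp add: mult.assoc)

lemma orth_centred_const: "orth_centred G H (\<lambda>x. c)"
proof -
  interpret G: sigma_finite_subalgebra M G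
    using G by (rule sigma_finite_subalgebra_of_subalgebra)
  interpret H: sigma_finite_subalgebra M H
    using H by (rule sigma_finite_subalgebra_of_subalgebra)
  have "AE x in M. real_cond_exp M G (\<lambda>x. c) x = c" "AE x in M. real_cond_exp M H (\<lambda>x. c) x = c"
    by (auto intro: G.real_cond_exp_F_meas H.real_cond_exp_F_meas)
  then have "AE x in M. real_cond_exp M G (\<lambda>x. c) x = real_cond_exp M H (\<lambda>x. c) x"
    by eventually_elim simp
  then show ?thesis
    by (simp add: orth_centred_iff_real_cond_exp_eq[OF G H HG])
qed

lemma orth_centred_add:
  assumes "integrable M f" "integrable M g" "orth_centred G H f" "orth_centred G H g"
  shows "orth_centred G H (\<lambda>x. f x + g x)"
  unfolding orth_centred_def
proof
  fix C assume "C \<in> sets G"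
  then have "C \<in> sets M" using G by (auto simp: subalgebra_def)
  then show "(\<integral>x. (f x + g x) * centred_indicator H C x \<partial>M) = 0"
    using assms \<open>C \<in> sets G\<close> integrable_mult_centred_indicator[OF H]
    by (simp add: distrib_right orth_centred_def)
qed

lemma orth_centred_sum:
  assumes "finite I" "\<And>i. i \<in> I \<Longrightarrow> integrable M (f i)" "\<And>i. i \<in> I \<Longrightarrow> orth_centred G H (f i)"
  shows "orth_centred G H (\<lambda>x. \<Sum>i\<in>I. f i x)"
  using assms
  by (induction I rule: finite_induct) (auto intro: orth_centred_add orth_centred_const)

lemma orth_centred_limit:
  assumes f: "integrable M f" and s: "\<And>i. integrable M (s i)" "\<And>i. orth_centred G H (s i)"
    and lim: "\<And>x. x \<in> space M \<Longrightarrow> (\<lambda>i. s i x) \<longlonglongrightarrow> f x"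
    and w: "integrable M w" "\<And>i. AE x in M. \<bar>s i x\<bar> \<le> w x"
  shows "orth_centred G H f"
  unfolding orth_centred_def
proof
  fix C assume "C \<in> sets G"
  then have C: "C \<in> sets M" using G by (auto simp: subalgebra_def)
  have "(\<lambda>i. \<integral>x. s i x * centred_indicator H C x \<partial>M) \<longlonglongrightarrow> (\<integral>x. f x * centred_indicator H C x \<partial>M)"
  proof (rule integral_dominated_convergence[where w="\<lambda>x. 2 * w x"])
    show "AE x in M. norm (s i x * centred_indicator H C x) \<le> 2 * w x" for i
      using w(2)[of i] centred_indicator_abs_le_2[OF H C]
    proof eventually_elim
      case (elim x)
      then have "\<bar>s i x\<bar> * \<bar>centred_indicator H C x\<bar> \<le> w x * 2"
        by (intro mult_mono') auto
      then show ?case by (simp add: abs_mult mult.commute)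
    qed
  qed (use f s w C lim in \<open>auto intro!: tendsto_mult simp: integrable_mult_centred_indicator[OF H]\<close>)
  moreover have "(\<integral>x. s i x * centred_indicator H C x \<partial>M) = 0" for i
    using s(2) \<open>C \<in> sets G\<close> unfolding orth_centred_def by blast
  ultimately show "(\<integral>x. f x * centred_indicator H C x \<partial>M) = 0"
    by (simp add: LIMSEQ_const_iff)
qed

lemma orth_centred_indicator_sigma_sets:
  assumes P: "Int_stable P" "sigma_sets (space M) P \<subseteq> sets M"
    and generators: "\<And>S. S \<in> P \<Longrightarrow> orth_centred G H (indicator S)"
    and S: "S \<in> sigma_sets (space M) P"
  shows "orth_centred G H (indicator S)"
proof -
  have "P \<subseteq> Pow (space M)"
    using P(2) sets.sets_into_space sigma_sets.Basic by blast
  from P(1) this S show ?thesis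
  proof (induction rule: sigma_sets_induct_disjoint)
    case (basic A)
    then show ?case by (rule generators)
  next
    case empty
    show ?case by (rule orth_centred_cong[OF _ orth_centred_const[of 0]]) simp
  next
    case (compl A)
    have "orth_centred G H (\<lambda>x. 1 + (- 1) * indicator A x)"
      using compl P(2)
      by (intro orth_centred_add orth_centred_const orth_centred_cmult)
         (auto intro: integrable_indicator_prob)
    then show ?case
      by (rule orth_centred_cong[rotated]) (auto split: split_indicator)
  next
    case (union A)
    have AM: "A i \<in> sets M" for i
      using union(2) P(2) by blast
    have partial_sum: "(\<Sum>j<i. indicator (A j) x) = (indicator (\<Union>j<i. A j) x :: real)" for i x
      using union(1) by (intro indicator_UN_disjoint[symmetric])
        (auto intro: disjoint_family_on_mono)
    show ?case
    proof (rule orth_centred_limit[where s="\<lambda>i x. \<Sum>j<i. indicator (A j) x" and w="\<lambda>x. 1"])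
      show "(\<lambda>i. \<Sum>j<i. indicator (A j) x) \<longlonglongrightarrow> (indicator (\<Union>i. A i) x :: real)" for x
        using union(1) indicator_sums[of A x] unfolding sums_def disjoint_family_on_def by auto
      show "AE x in M. \<bar>\<Sum>j<i. indicator (A j) x :: real\<bar> \<le> 1" for i
        unfolding partial_sum by (auto split: split_indicator)
    qed (use AM union(3) in \<open>auto intro!: orth_centred_sum integrable_indicator_prob\<close>)
  qed
qed

lemma orth_centred_borel_measurable:
  assumes N: "subalgebra M N" "sets N = sigma_sets (space M) P" "Int_stable P"
    and generators: "\<And>S. S \<in> P \<Longrightarrow> orth_centred G H (indicator S)"
    and f: "integrable M f" "f \<in> borel_measurable N"
  shows "orth_centred G H f"
proof -
  have "sigma_sets (space M) P \<subseteq> sets M"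
    using N(1,2) by (simp add: subalgebra_def)
  then have ind: "orth_centred G H (indicator A)" if "A \<in> sets N" for A
    using orth_centred_indicator_sigma_sets[OF N(3) _ generators] that N(2) by blast
  have integrable_M: "integrable M g" if "integrable (restr_to_subalg M N) g" for g :: "'a \<Rightarrow> real"
    using integrable_from_subalg[OF N(1) that] .
  have "integrable (restr_to_subalg M N) f"
    by (rule integrable_in_subalg[OF N(1) f(2) f(1)])
  then show ?thesis
  proof (induction rule: integrable_induct)
    case (base A c)
    have "orth_centred G H (\<lambda>x. c * indicator A x)"
      using base(1) N(1) by (intro orth_centred_cmult ind) (simp add: sets_restr_to_subalg)
    then show ?case by (rule orth_centred_cong[rotated]) simp
  next
    case (add f g)
    then show ?case by (intro orth_centred_add integrable_M)
  next
    case (lim f s)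
    show ?case
    proof (rule orth_centred_limit[where s=s and w="\<lambda>x. 2 * \<bar>f x\<bar>"])
      show f: "integrable M f" by (rule integrable_M[OF lim.hyps(4)])
      then show "integrable M (\<lambda>x. 2 * \<bar>f x\<bar>)" by simp
      show "integrable M (s i)" for i by (rule integrable_M[OF lim.hyps(1)])
      show "orth_centred G H (s i)" for i by (rule lim.IH)
      show "(\<lambda>i. s i x) \<longlonglongrightarrow> f x" if "x \<in> space M" for x
        using lim.hyps(2) that by (simp add: space_restr_to_subalg)
      show "AE x in M. \<bar>s i x\<bar> \<le> 2 * \<bar>f x\<bar>" for i
        using lim.hyps(3) by (intro AE_I2) (simp add: space_restr_to_subalg)
    qed
  qed
qed

lemma orth_centred_indicator_Int:
  assumes B: "B \<in> sets M" and D: "D \<in> sets H"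
    and hyp: "AE x in M. real_cond_exp M G (indicator B) x = real_cond_exp M H (indicator B) x"
  shows "orth_centred G H (indicator (B \<inter> D))"
proof -
  interpret G: sigma_finite_subalgebra M G
    using G by (rule sigma_finite_subalgebra_of_subalgebra)
  interpret H: sigma_finite_subalgebra M H
    using H by (rule sigma_finite_subalgebra_of_subalgebra)
  have [measurable]: "B \<in> sets M" "D \<in> sets G" "D \<in> sets H" using B D HG by auto
  have "D \<in> sets M" using \<open>D \<in> sets G\<close> G by (auto simp: subalgebra_def)
  then have BD: "B \<inter> D \<in> sets M" using B by (simp add: sets.Int)
  have ind: "indicator (B \<inter> D) = (\<lambda>x. indicator D x * indicator B x :: real)"
    by (auto split: split_indicator)
  have int: "integrable M (\<lambda>x. indicator D x * indicator B x :: real)"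
    using integrable_indicator_prob[OF BD] unfolding ind .
  have "AE x in M. real_cond_exp M G (indicator (B \<inter> D)) x = indicator D x * real_cond_exp M G (indicator B) x"
    unfolding ind by (rule G.real_cond_exp_mult[OF _ _ int]) measurable
  moreover have "AE x in M. real_cond_exp M H (indicator (B \<inter> D)) x = indicator D x * real_cond_exp M H (indicator B) x"
    unfolding ind by (rule H.real_cond_exp_mult[OF _ _ int]) measurable
  ultimately have "AE x in M. real_cond_exp M G (indicator (B \<inter> D)) x = real_cond_exp M H (indicator (B \<inter> D)) x"
    using hyp by eventually_elim simp
  then show ?thesis
    by (simp add: orth_centred_iff_real_cond_exp_eq[OF G H HG integrable_indicator_prob[OF BD]])
qed

lemma real_cond_exp_eq_extend_generators:
  assumes K: "K \<subseteq> sets M" "Int_stable K"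
    and hyp: "\<And>B. B \<in> K \<Longrightarrow>
      AE x in M. real_cond_exp M G (indicator B) x = real_cond_exp M H (indicator B) x"
    and N: "subalgebra M N" "sets N = sigma_sets (space M) {B \<inter> D | B D. B \<in> K \<and> D \<in> sets H}"
    and f: "integrable M f" "f \<in> borel_measurable N"
  shows "AE x in M. real_cond_exp M G f x = real_cond_exp M H f x"
proof -
  let ?P = "{B \<inter> D | B D. B \<in> K \<and> D \<in> sets H}"
  have "Int_stable (sets H)" by (simp add: Int_stable_def sets.Int)
  then have "Int_stable ?P" by (rule Int_stable_Int_pairs[OF K(2)])
  moreover have "orth_centred G H (indicator S)" if S_P: "S \<in> ?P" for S
  proof -
    obtain B D where S: "S = B \<inter> D" "B \<in> K" "D \<in> sets H" using S_P by blast
    have "B \<in> sets M" using K(1) S(2) by blast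
    then show ?thesis
      unfolding S(1) by (rule orth_centred_indicator_Int[OF _ S(3) hyp[OF S(2)]])
  qed
  ultimately have "orth_centred G H f"
    using orth_centred_borel_measurable[OF N(1,2) _ _ f] by blast
  then show ?thesis
    using orth_centred_iff_real_cond_exp_eq[OF G H HG f(1)] by blast
qed

end

text \<open>Symmetry of conditional independence: if G is independent of F given H, tested on
  indicators of G, then F is independent of G given H, tested on F-measurable functions.\<close>

lemma real_cond_exp_eq_swap_roles:
  assumes G: "subalgebra M G" and H: "subalgebra M H" and HG: "sets H \<subseteq> sets G"
    and F: "subalgebra M F"
    and hyp: "\<And>C. C \<in> sets G \<Longrightarrow>
      AE x in M. real_cond_exp M F (indicator C) x = real_cond_exp M H (indicator C) x"
    and \<phi>: "integrable M \<phi>" "\<phi> \<in> borel_measurable F"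
  shows "AE x in M. real_cond_exp M G \<phi> x = real_cond_exp M H \<phi> x"
proof -
  interpret F: sigma_finite_subalgebra M F
    using F by (rule sigma_finite_subalgebra_of_subalgebra)
  have "(\<integral>x. \<phi> x * centred_indicator H C x \<partial>M) = 0" if "C \<in> sets G" for C
  proof -
    have C [measurable]: "C \<in> sets M" using that G by (auto simp: subalgebra_def)
    have "(\<integral>x. \<phi> x * real_cond_exp M H (indicator C) x \<partial>M)
        = (\<integral>x. \<phi> x * real_cond_exp M F (indicator C) x \<partial>M)"
      using hyp[OF that] \<phi> by (intro integral_cong_AE) auto
    also have "\<dots> = (\<integral>x. \<phi> x * indicator C x \<partial>M)"
      using \<phi> integrable_real_mult_indicator[OF C \<phi>(1)] by (intro F.real_cond_exp_intg(2)) auto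
    finally show ?thesis
      using integrable_real_mult_indicator[OF C \<phi>(1)]
        integrable_mult_bounded[OF \<phi>(1) _ real_cond_exp_indicator_abs_le_1[OF H C]]
      by (simp add: centred_indicator_def right_diff_distrib mult.commute)
  qed
  then have "orth_centred G H \<phi>" unfolding orth_centred_def by blast
  then show ?thesis using orth_centred_iff_real_cond_exp_eq[OF G H HG \<phi>(1)] by blast
qed

end

section \<open>Traces of \<sigma>-algebras and generated \<sigma>-algebras\<close>

lemma sigma_sets_trace_atom:
  assumes F: "F \<subseteq> \<Omega>" and K: "\<And>B. B \<in> K \<Longrightarrow> F \<subseteq> B \<or> F \<inter> B = {}"
    and S: "S \<in> sigma_sets \<Omega> (K \<union> L)"
  shows "\<exists>C\<in>sigma_sets \<Omega> L. S \<inter> F = C \<inter> F"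
  using S
proof (induction rule: sigma_sets.induct)
  case (Basic S)
  then consider "S \<in> L" | "F \<subseteq> S" | "F \<inter> S = {}" using K by blast
  then show ?case
  proof cases
    case 2
    then show ?thesis using F sigma_sets_top by blast
  qed (blast intro: sigma_sets.Empty)+
next
  case Empty
  then show ?case by (blast intro: sigma_sets.Empty)
next
  case (Compl S)
  then obtain C where "C \<in> sigma_sets \<Omega> L" "S \<inter> F = C \<inter> F" by blast
  then show ?case using F by (intro bexI[of _ "\<Omega> - C"]) (auto intro: sigma_sets.Compl)
next
  case (Union S)
  then obtain C where "\<And>i. C i \<in> sigma_sets \<Omega> L" "\<And>i. S i \<inter> F = C i \<inter> F" by metis
  then show ?case by (intro bexI[of _ "\<Union>i. C i"]) (auto intro: sigma_sets.Union)
qed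

lemma borel_measurable_trace_extend:
  fixes g :: "'a \<Rightarrow> real"
  assumes g: "g \<in> borel_measurable N" and F: "F \<subseteq> space N"
    and traces: "\<And>S. S \<in> sets N \<Longrightarrow> \<exists>C\<in>sets N'. S \<inter> F = C \<inter> F"
  shows "\<exists>g'\<in>borel_measurable N'. \<forall>x\<in>F. g x = g' x"
proof -
  obtain s where s: "\<And>i. simple_function N (s i)" "\<And>x. x \<in> space N \<Longrightarrow> (\<lambda>i. s i x) \<longlonglongrightarrow> g x"
    using borel_measurable_implies_sequence_metric[OF g, of 0] by blast
  have "\<forall>i y. \<exists>C\<in>sets N'. (s i -` {y} \<inter> space N) \<inter> F = C \<inter> F"
    using traces simple_functionD(2)[OF s(1)] by simp
  then obtain C where C: "\<And>i y. C i y \<in> sets N'" "\<And>i y. (s i -` {y} \<inter> space N) \<inter> F = C i y \<inter> F"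
    by metis
  define s' where "s' i x = (\<Sum>y\<in>s i ` space N. y * indicator (C i y) x)" for i x
  have s'_eq: "s' i x = s i x" if "x \<in> F" for i x
  proof -
    have "x \<in> C i y \<longleftrightarrow> x \<in> s i -` {y} \<inter> space N" for y
      using C(2)[of i y] that by blast
    then have "s' i x = (\<Sum>y\<in>s i ` space N. indicator (s i -` {y} \<inter> space N) x *\<^sub>R y)"
      unfolding s'_def by (intro sum.cong) (auto simp: indicator_def)
    also have "\<dots> = s i x"
      using F that by (intro simple_function_indicator_representation_banach[OF s(1), symmetric]) auto
    finally show ?thesis .
  qed
  define g' where "g' x = lim (\<lambda>i. s' i x)" for x
  have "s' i \<in> borel_measurable N'" for i
    unfolding s'_def using C(1) by measurable
  then have "g' \<in> borel_measurable N'"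
    unfolding g'_def by measurable
  moreover have "g x = g' x" if "x \<in> F" for x
  proof -
    have "x \<in> space N" using F that by blast
    then have "(\<lambda>i. s' i x) \<longlonglongrightarrow> g x"
      using s(2) by (simp add: s'_eq[OF that])
    then show ?thesis unfolding g'_def by (rule limI[symmetric])
  qed
  ultimately show ?thesis by blast
qed

definition preimage_sets :: "'a measure \<Rightarrow> ('v \<Rightarrow> 'a \<Rightarrow> real) \<Rightarrow> 'v set \<Rightarrow> 'a set set" where
  "preimage_sets M X S = (\<Union>v\<in>S. {X v -` B \<inter> space M | B. B \<in> sets borel})"

lemma preimage_sets_subset_Pow: "preimage_sets M X S \<subseteq> Pow (space M)"
  unfolding preimage_sets_def by auto

lemma preimage_sets_insert:
  "preimage_sets M X (insert v S) = preimage_sets M X {v} \<union> preimage_sets M X S"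
  unfolding preimage_sets_def by auto

lemma gen_eq_sigma: "gen M X S = sigma (space M) (preimage_sets M X S)"
  by (simp add: gen_def preimage_sets_def)

lemma space_gen [simp]: "space (gen M X S) = space M"
  by (simp add: gen_eq_sigma space_measure_of_conv)

lemma sets_gen: "sets (gen M X S) = sigma_sets (space M) (preimage_sets M X S)"
  by (simp add: gen_eq_sigma sets_measure_of preimage_sets_subset_Pow)

lemma preimage_sets_subset_sets_gen: "preimage_sets M X S \<subseteq> sets (gen M X S)"
  unfolding sets_gen by auto

lemma sets_gen_mono: "S \<subseteq> T \<Longrightarrow> sets (gen M X S) \<subseteq> sets (gen M X T)"
  unfolding sets_gen preimage_sets_def by (intro sigma_sets_mono') auto

lemma subalgebra_gen_gen: "S \<subseteq> T \<Longrightarrow> subalgebra (gen M X T) (gen M X S)"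
  unfolding subalgebra_def using sets_gen_mono by simp

lemma subalgebra_gen:
  assumes "\<And>v. v \<in> S \<Longrightarrow> X v \<in> borel_measurable M"
  shows "subalgebra M (gen M X S)"
proof -
  have "preimage_sets M X S \<subseteq> sets M"
    unfolding preimage_sets_def using assms by (auto intro!: measurable_sets)
  then show ?thesis
    unfolding subalgebra_def sets_gen by (simp add: sets.sigma_sets_subset)
qed

lemma measurable_gen: "v \<in> S \<Longrightarrow> X v \<in> borel_measurable (gen M X S)"
  using preimage_sets_subset_sets_gen[of M X S] by (intro measurableI) (auto simp: preimage_sets_def)

lemma Int_stable_preimage_sets_singleton: "Int_stable (preimage_sets M X {v})"
  unfolding Int_stable_def preimage_sets_def
proof (clarsimp)
  fix B B' :: "real set" assume "B \<in> sets borel" "B' \<in> sets borel"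
  then show "\<exists>B''. X v -` B \<inter> space M \<inter> (X v -` B' \<inter> space M) = X v -` B'' \<inter> space M \<and> B'' \<in> sets borel"
    by (intro exI[of _ "B \<inter> B'"]) auto
qed

lemma sets_gen_insert:
  "sets (gen M X (insert v R))
     = sigma_sets (space M) {B \<inter> D | B D. B \<in> preimage_sets M X {v} \<and> D \<in> sets (gen M X R)}"
  (is "_ = sigma_sets _ ?P")
proof
  have "preimage_sets M X (insert v R) \<subseteq> ?P"
  proof
    fix S assume S_preimage: "S \<in> preimage_sets M X (insert v R)"
    have S: "S \<subseteq> space M" using S_preimage preimage_sets_subset_Pow by blast
    from S_preimage consider "S \<in> preimage_sets M X {v}" | "S \<in> preimage_sets M X R"
      using preimage_sets_insert[of M X v R] by blast
    then show "S \<in> ?P"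
    proof cases
      case 1
      moreover have "space M \<in> sets (gen M X R)" using sets.top[of "gen M X R"] by simp
      ultimately show ?thesis using S by (intro CollectI exI[of _ S] exI[of _ "space M"]) auto
    next
      case 2
      then have "S \<in> sets (gen M X R)" using preimage_sets_subset_sets_gen by blast
      moreover have "space M \<in> preimage_sets M X {v}"
        unfolding preimage_sets_def by (auto intro!: exI[of _ UNIV])
      ultimately show ?thesis using S by (intro CollectI exI[of _ "space M"] exI[of _ S]) auto
    qed
  qed
  then show "sets (gen M X (insert v R)) \<subseteq> sigma_sets (space M) ?P"
    unfolding sets_gen[of M X "insert v R"] by (rule sigma_sets_mono')
  have "?P \<subseteq> sets (gen M X (insert v R))"
  proof clarify
    fix B D assume "B \<in> preimage_sets M X {v}" "D \<in> sets (gen M X R)"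
    then have "B \<in> sets (gen M X (insert v R))" "D \<in> sets (gen M X (insert v R))"
      using preimage_sets_subset_sets_gen[of M X "insert v R"] sets_gen_mono[of R "insert v R" M X]
        preimage_sets_insert[of M X v R] by blast+
    then show "B \<inter> D \<in> sets (gen M X (insert v R))" by (intro sets.Int)
  qed
  then show "sigma_sets (space M) ?P \<subseteq> sets (gen M X (insert v R))"
    using sets.sigma_sets_subset[of ?P "gen M X (insert v R)"] by simp
qed

lemma borel_measurable_gen_insert_on_level_set:
  fixes g :: "'a \<Rightarrow> real"
  assumes "g \<in> borel_measurable (gen M X (insert v R))"
  shows "\<exists>g'\<in>borel_measurable (gen M X R). \<forall>\<omega>\<in>space M. X v \<omega> = a \<longrightarrow> g \<omega> = g' \<omega>"
proof -
  let ?F = "{\<omega>\<in>space M. X v \<omega> = a}"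
  have "\<exists>C\<in>sets (gen M X R). S \<inter> ?F = C \<inter> ?F" if "S \<in> sets (gen M X (insert v R))" for S
    using that unfolding sets_gen preimage_sets_insert[of M X v R]
    by (intro sigma_sets_trace_atom) (auto simp: preimage_sets_def)
  then show ?thesis
    using borel_measurable_trace_extend[OF assms, where N' = "gen M X R" and F = "?F"] by auto
qed

section \<open>Ancestral sets\<close>

definition ancestral :: "'v set \<Rightarrow> ('v \<times> 'v) set \<Rightarrow> 'v set \<Rightarrow> bool" where
  "ancestral V E P \<longleftrightarrow> P \<subseteq> V \<and> (\<forall>u\<in>P. pa E u \<subseteq> P)"

lemma ancestral_insert:
  "ancestral V E P \<Longrightarrow> v \<in> V \<Longrightarrow> pa E v \<subseteq> P \<Longrightarrow> ancestral V E (insert v P)"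
  unfolding ancestral_def by auto

lemma ancestral_rtrancl:
  assumes "ancestral V E P" "(u, w) \<in> E\<^sup>*" "w \<in> P"
  shows "u \<in> P"
  using assms(2,3)
  by (induction rule: converse_rtrancl_induct) (use assms(1) in \<open>auto simp: ancestral_def pa_def\<close>)

lemma ancestral_subset_nd:
  assumes "ancestral V E P" "v \<notin> P"
  shows "P \<subseteq> nd V E v"
proof
  fix w assume "w \<in> P"
  then have "(v, w) \<notin> E\<^sup>*" using ancestral_rtrancl[OF assms(1)] assms(2) by blast
  then show "w \<in> nd V E v" using \<open>w \<in> P\<close> assms(1) by (auto simp: nd_def de_def ancestral_def)
qed

lemma ancestral_nd:
  assumes "E \<subseteq> V \<times> V"
  shows "ancestral V E (nd V E v)"
  unfolding ancestral_def
proof (intro conjI ballI subsetI)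
  fix u p assume "u \<in> nd V E v" "p \<in> pa E u"
  then have "(p, u) \<in> E" "(v, u) \<notin> E\<^sup>*" by (auto simp: pa_def nd_def de_def)
  then have "(v, p) \<notin> E\<^sup>*" by (meson rtrancl.rtrancl_into_rtrancl)
  then show "p \<in> nd V E v" using \<open>(p, u) \<in> E\<close> assms by (auto simp: nd_def de_def)
qed (simp add: nd_def)

lemma pa_subset_nd:
  assumes "is_dag V E"
  shows "pa E v \<subseteq> nd V E v"
proof
  fix p assume "p \<in> pa E v"
  then have "(p, v) \<in> E" by (simp add: pa_def)
  moreover have "(v, p) \<notin> E\<^sup>*"
    using assms \<open>(p, v) \<in> E\<close> by (auto simp: is_dag_def acyclic_def dest: rtrancl_into_trancl1)
  ultimately show "p \<in> nd V E v"
    using assms by (auto simp: is_dag_def nd_def de_def)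
qed

lemma ancestral_extend:
  assumes dag: "is_dag V E" and P: "ancestral V E P" "P \<noteq> V"
  shows "\<exists>v\<in>V - P. pa E v \<subseteq> P"
proof -
  have "wf E"
    using dag finite_subset[of E "V \<times> V"] by (intro finite_acyclic_wf) (auto simp: is_dag_def)
  moreover obtain x where "x \<in> V - P" using P by (auto simp: ancestral_def)
  ultimately obtain v where v: "v \<in> V - P" "\<And>u. (u, v) \<in> E \<Longrightarrow> u \<notin> V - P"
    using wfE_min by metis
  moreover have "pa E v \<subseteq> V" using dag by (auto simp: is_dag_def pa_def)
  ultimately show ?thesis by (auto simp: pa_def)
qed

definition de_avoiding :: "'v set \<Rightarrow> ('v \<times> 'v) set \<Rightarrow> 'v \<Rightarrow> 'v \<Rightarrow> 'v set" where
  "de_avoiding V E A b = {v. (b, v) \<in> (Restr E (V - {A}))\<^sup>*}"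

lemma start_in_de_avoiding: "b \<in> de_avoiding V E A b"
  by (simp add: de_avoiding_def)

lemma avoided_notin_de_avoiding: "b \<noteq> A \<Longrightarrow> A \<notin> de_avoiding V E A b"
  unfolding de_avoiding_def by (auto elim: rtranclE)

lemma de_avoiding_subset_de: "de_avoiding V E A b \<subseteq> de E b"
  unfolding de_avoiding_def de_def using rtrancl_mono[of "Restr E (V - {A})" E] by auto

lemma pa_disjoint_de_avoiding:
  assumes "E \<subseteq> V \<times> V" "b \<noteq> A" "v \<in> V" "v \<noteq> A" "v \<notin> de_avoiding V E A b"
  shows "pa E v \<inter> de_avoiding V E A b = {}"
proof -
  have "(p, v) \<notin> E" if p: "p \<in> de_avoiding V E A b" for p
  proof
    assume "(p, v) \<in> E"
    moreover have "p \<in> V" "p \<noteq> A"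
      using assms p avoided_notin_de_avoiding[of b A V E] \<open>(p, v) \<in> E\<close> by auto
    ultimately have "(p, v) \<in> Restr E (V - {A})" using assms by auto
    with p have "v \<in> de_avoiding V E A b"
      unfolding de_avoiding_def by (simp add: rtrancl.rtrancl_into_rtrancl)
    with assms show False by blast
  qed
  then show ?thesis by (auto simp: pa_def)
qed

section \<open>The local Markov property\<close>

locale bayesian_network = prob_space M for M :: "'a measure" +
  fixes V :: "'v set" and E :: "('v \<times> 'v) set" and X :: "'v \<Rightarrow> 'a \<Rightarrow> real"
  assumes dag: "is_dag V E"
    and random_variable_X: "\<And>v. v \<in> V \<Longrightarrow> X v \<in> borel_measurable M"
    and markov: "local_markov M V E X"
begin

lemma edges_subset: "E \<subseteq> V \<times> V"
  using dag by (simp add: is_dag_def)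

lemma pa_subset_V: "pa E v \<subseteq> V"
  using edges_subset by (auto simp: pa_def)

lemma nd_subset_V: "nd V E v \<subseteq> V"
  by (auto simp: nd_def)

lemma subalgebra_gen_V: "S \<subseteq> V \<Longrightarrow> subalgebra M (gen M X S)"
  by (rule subalgebra_gen) (use random_variable_X in blast)

lemma sigma_finite_subalgebra_gen: "S \<subseteq> V \<Longrightarrow> sigma_finite_subalgebra M (gen M X S)"
  by (rule sigma_finite_subalgebra_of_subalgebra[OF subalgebra_gen_V])

lemma borel_measurable_gen_M: "S \<subseteq> V \<Longrightarrow> f \<in> borel_measurable (gen M X S) \<Longrightarrow> f \<in> borel_measurable M"
  using measurable_from_subalg[OF subalgebra_gen_V] by blast

lemma borel_measurable_gen_mono:
  "S \<subseteq> T \<Longrightarrow> f \<in> borel_measurable (gen M X S) \<Longrightarrow> f \<in> borel_measurable (gen M X T)"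
  using measurable_from_subalg[OF subalgebra_gen_gen] by blast

lemma real_cond_exp_gen_nested_eq:
  assumes "S \<subseteq> U" "U \<subseteq> V" "integrable M f"
    "AE x in M. real_cond_exp M (gen M X U) f x = \<phi> x" "\<phi> \<in> borel_measurable M"
  shows "AE x in M. real_cond_exp M (gen M X S) f x = real_cond_exp M (gen M X S) \<phi> x"
  by (rule real_cond_exp_nested_eq[OF subalgebra_gen_V[OF assms(2)] subalgebra_gen_gen[OF assms(1)]
        assms(3-5)])

lemma integrable_real_cond_exp_gen_version:
  assumes "U \<subseteq> V" "integrable M f"
    "AE x in M. real_cond_exp M (gen M X U) f x = \<phi> x" "\<phi> \<in> borel_measurable M"
  shows "integrable M \<phi>"
  using sigma_finite_subalgebra.real_cond_exp_int(1)[OF sigma_finite_subalgebra_gen[OF assms(1)] assms(2)]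
    assms(4,3) by (rule integrable_cong_AE_imp)

lemma local_markov_between:
  assumes v: "v \<in> V" and H: "pa E v \<subseteq> H" "H \<subseteq> nd V E v" and B: "B \<in> sets borel"
  shows "AE x in M. real_cond_exp M (gen M X H) (\<lambda>\<omega>. indicator B (X v \<omega>)) x
                  = real_cond_exp M (gen M X (pa E v)) (\<lambda>\<omega>. indicator B (X v \<omega>)) x"
proof -
  let ?f = "\<lambda>\<omega>. indicator B (X v \<omega>) :: real"
  interpret H: sigma_finite_subalgebra M "gen M X H"
    using H nd_subset_V by (intro sigma_finite_subalgebra_gen) blast
  have [measurable]: "X v \<in> borel_measurable M" using random_variable_X v .
  have f: "integrable M ?f"
    using B by (intro integrable_const_bound[where B=1]) (auto split: split_indicator)
  have "AE x in M. real_cond_exp M (gen M X (nd V E v)) ?f x = real_cond_exp M (gen M X (pa E v)) ?f x"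
    using markov v B by (simp add: local_markov_def)
  then have "AE x in M. real_cond_exp M (gen M X H) ?f x
      = real_cond_exp M (gen M X H) (real_cond_exp M (gen M X (pa E v)) ?f) x"
    by (rule real_cond_exp_gen_nested_eq[OF H(2) nd_subset_V f]) (rule borel_measurable_cond_exp2)
  moreover have "AE x in M. real_cond_exp M (gen M X H) (real_cond_exp M (gen M X (pa E v)) ?f) x
      = real_cond_exp M (gen M X (pa E v)) ?f x"
    by (intro H.real_cond_exp_F_meas sigma_finite_subalgebra.real_cond_exp_int(1)
        sigma_finite_subalgebra_gen pa_subset_V f borel_measurable_gen_mono[OF H(1)]
        borel_measurable_cond_exp)
  ultimately show ?thesis by eventually_elim simp
qed

lemma local_markov_between_preimage:
  assumes v: "v \<in> V" and H: "pa E v \<subseteq> H" "H \<subseteq> nd V E v" and S: "S \<in> preimage_sets M X {v}"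
  shows "AE x in M. real_cond_exp M (gen M X H) (indicator S) x
                  = real_cond_exp M (gen M X (pa E v)) (indicator S) x"
proof -
  obtain B where B: "B \<in> sets borel" "S = X v -` B \<inter> space M"
    using S by (auto simp: preimage_sets_def)
  have [measurable]: "X v \<in> borel_measurable M" using random_variable_X v .
  have ind_S: "AE x in M. indicator S x = indicator B (X v x)"
    using B(2) by (intro AE_I2) (simp split: split_indicator)
  have cong_S: "AE x in M. real_cond_exp M (gen M X U) (indicator S) x
      = real_cond_exp M (gen M X U) (\<lambda>\<omega>. indicator B (X v \<omega>)) x" if "U \<subseteq> V" for U
    using B by (intro sigma_finite_subalgebra.real_cond_exp_cong[OF sigma_finite_subalgebra_gen[OF that] ind_S])
      auto
  have "H \<subseteq> V" using H(2) nd_subset_V by blast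
  from cong_S[OF this] cong_S[OF pa_subset_V[of v]] local_markov_between[OF v H B(1)] show ?thesis
    by eventually_elim simp
qed

lemma real_cond_exp_local_markov:
  assumes v: "v \<in> V" and R: "pa E v \<subseteq> R" "R \<subseteq> W" "W \<subseteq> nd V E v"
    and f: "integrable M f" "f \<in> borel_measurable (gen M X (insert v R))"
  shows "AE x in M. real_cond_exp M (gen M X W) f x = real_cond_exp M (gen M X R) f x"
proof (rule real_cond_exp_eq_extend_generators)
  have W: "W \<subseteq> V" and R': "R \<subseteq> V" using R nd_subset_V by blast+
  show "subalgebra M (gen M X W)" "subalgebra M (gen M X R)"
    using W R' by (auto intro: subalgebra_gen_V)
  show "sets (gen M X R) \<subseteq> sets (gen M X W)" using R(2) by (rule sets_gen_mono)
  show "preimage_sets M X {v} \<subseteq> sets M"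
    using preimage_sets_subset_sets_gen[of M X "{v}"] subalgebra_gen_V[of "{v}"] v
    by (auto simp: subalgebra_def)
  show "Int_stable (preimage_sets M X {v})" by (rule Int_stable_preimage_sets_singleton)
  show "subalgebra M (gen M X (insert v R))" using v R' by (intro subalgebra_gen_V) blast
  show "sets (gen M X (insert v R))
    = sigma_sets (space M) {B \<inter> D |B D. B \<in> preimage_sets M X {v} \<and> D \<in> sets (gen M X R)}"
    by (rule sets_gen_insert)
  show "integrable M f" "f \<in> borel_measurable (gen M X (insert v R))" by (fact f)+
  fix S assume S: "S \<in> preimage_sets M X {v}"
  have "pa E v \<subseteq> W" "R \<subseteq> nd V E v" using R by blast+
  from local_markov_between_preimage[OF v this(1) R(3) S] local_markov_between_preimage[OF v R(1) this(2) S]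
  show "AE x in M. real_cond_exp M (gen M X W) (indicator S) x
      = real_cond_exp M (gen M X R) (indicator S) x"
    by eventually_elim simp
qed

lemma real_cond_exp_insert_pa_eq:
  assumes v: "v \<in> V" and \<phi>: "integrable M \<phi>" "\<phi> \<in> borel_measurable (gen M X (nd V E v))"
  shows "AE x in M. real_cond_exp M (gen M X (insert v (pa E v))) \<phi> x
                  = real_cond_exp M (gen M X (pa E v)) \<phi> x"
proof (rule real_cond_exp_eq_swap_roles[OF _ _ _ _ _ \<phi>])
  show "subalgebra M (gen M X (insert v (pa E v)))" "subalgebra M (gen M X (pa E v))"
    "subalgebra M (gen M X (nd V E v))"
    using v pa_subset_V nd_subset_V by (auto intro!: subalgebra_gen_V)
  show "sets (gen M X (pa E v)) \<subseteq> sets (gen M X (insert v (pa E v)))"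
    by (rule sets_gen_mono[OF subset_insertI])
  fix C assume C: "C \<in> sets (gen M X (insert v (pa E v)))"
  then have "C \<in> sets M"
    using subalgebra_gen_V[of "insert v (pa E v)"] v pa_subset_V by (auto simp: subalgebra_def)
  then show "AE x in M. real_cond_exp M (gen M X (nd V E v)) (indicator C) x
      = real_cond_exp M (gen M X (pa E v)) (indicator C) x"
    using C by (intro real_cond_exp_local_markov[OF v order_refl pa_subset_nd[OF dag] order_refl]
        integrable_indicator_prob borel_measurable_indicator)
qed

end

locale indir_setting = bayesian_network M V E X for M :: "'a measure" and V E X +
  fixes A Y b :: 'v and a :: real
  assumes A: "A \<in> V" and Y: "Y \<in> V"
    and propensity_pos: "AE \<omega> in M. propensity M E X A a \<omega> > 0"
    and integrable_J: "integrable M (J_fun M E X A a Y)"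
    and indir: "b \<in> indir V E A Y"
begin

abbreviation T :: "'v set" where "T \<equiv> de_avoiding V E A b"
abbreviation \<pi> :: "'a \<Rightarrow> real" where "\<pi> \<equiv> propensity M E X A a"
abbreviation J :: "'a \<Rightarrow> real" where "J \<equiv> J_fun M E X A a Y"

definition Ia :: "'a \<Rightarrow> real" where "Ia = (\<lambda>\<omega>. indicator {a} (X A \<omega>))"
definition IaY :: "'a \<Rightarrow> real" where "IaY = (\<lambda>\<omega>. Ia \<omega> * X Y \<omega>)"

lemma b_V: "b \<in> V" and b_neq_A: "b \<noteq> A" and A_de_b: "A \<in> de E b" and Y_notin_T: "Y \<notin> T"
  using indir by (auto simp: indir_def an_def de_def de_avoiding_def)

lemma A_notin_T: "A \<notin> T"
  using avoided_notin_de_avoiding[OF b_neq_A] .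

lemma propensity_eq: "\<pi> = real_cond_exp M (gen M X (pa E A)) Ia"
  by (simp add: propensity_def Ia_def)

lemma J_eq: "J = (\<lambda>\<omega>. Ia \<omega> / \<pi> \<omega> * IaY \<omega>)"
  by (simp add: fun_eq_iff J_fun_def IaY_def Ia_def split: split_indicator)

lemma borel_measurable_Ia_gen: "A \<in> S \<Longrightarrow> Ia \<in> borel_measurable (gen M X S)"
  unfolding Ia_def using measurable_gen[of A S X M] by measurable

lemma borel_measurable_IaY_gen: "A \<in> S \<Longrightarrow> Y \<in> S \<Longrightarrow> IaY \<in> borel_measurable (gen M X S)"
  unfolding IaY_def using borel_measurable_Ia_gen measurable_gen[of Y S X M] by measurable

lemma borel_measurable_propensity_gen: "pa E A \<subseteq> S \<Longrightarrow> \<pi> \<in> borel_measurable (gen M X S)"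
  unfolding propensity_eq by (rule borel_measurable_gen_mono[OF _ borel_measurable_cond_exp])

lemma borel_measurable_Ia [measurable]: "Ia \<in> borel_measurable M"
  using A by (intro borel_measurable_gen_M[of "{A}"] borel_measurable_Ia_gen) auto

lemma borel_measurable_IaY [measurable]: "IaY \<in> borel_measurable M"
  using A Y by (intro borel_measurable_gen_M[of "{A, Y}"] borel_measurable_IaY_gen) auto

lemma borel_measurable_propensity [measurable]: "\<pi> \<in> borel_measurable M"
  unfolding propensity_eq by (rule borel_measurable_cond_exp2)

lemma integrable_Ia: "integrable M Ia"
  by (rule integrable_const_bound[where B=1, OF _ borel_measurable_Ia]) (simp add: Ia_def)

lemma propensity_le_1: "AE \<omega> in M. \<pi> \<omega> \<le> 1"
proof -
  interpret pa: sigma_finite_subalgebra M "gen M X (pa E A)"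
    by (rule sigma_finite_subalgebra_gen[OF pa_subset_V])
  show ?thesis
    unfolding propensity_eq by (rule pa.real_cond_exp_le_c[OF integrable_Ia]) (simp add: Ia_def)
qed

lemma integrable_IaY: "integrable M IaY"
proof (rule Bochner_Integration.integrable_bound[OF integrable_J borel_measurable_IaY])
  show "AE \<omega> in M. norm (IaY \<omega>) \<le> norm (J \<omega>)"
    using propensity_pos propensity_le_1
  proof eventually_elim
    case (elim \<omega>)
    have "Ia \<omega> * IaY \<omega> = IaY \<omega>"
      by (simp add: IaY_def Ia_def split: split_indicator)
    then have "IaY \<omega> = J \<omega> * \<pi> \<omega>"
      using elim by (simp add: J_eq)
    then have "\<bar>IaY \<omega>\<bar> = \<bar>J \<omega>\<bar> * \<pi> \<omega>"
      using elim by (simp add: abs_mult)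
    also have "\<dots> \<le> \<bar>J \<omega>\<bar>"
      using elim by (intro mult_left_le) auto
    finally show ?case by simp
  qed
qed

lemma real_cond_exp_Ia_ancestral:
  assumes "ancestral V E P" "A \<notin> P" "pa E A \<subseteq> P"
  shows "AE \<omega> in M. real_cond_exp M (gen M X P) Ia \<omega> = \<pi> \<omega>"
  unfolding propensity_eq
  by (rule real_cond_exp_local_markov[OF A order_refl assms(3) ancestral_subset_nd[OF assms(1,2)]
        integrable_Ia borel_measurable_Ia_gen]) simp

lemma real_cond_exp_J_insert_A:
  assumes P: "pa E A \<subseteq> P" "P \<subseteq> V"
    and \<phi>: "AE \<omega> in M. real_cond_exp M (gen M X (insert A P)) IaY \<omega> = \<phi> \<omega>"
  shows "AE \<omega> in M. real_cond_exp M (gen M X (insert A P)) J \<omega> = Ia \<omega> / \<pi> \<omega> * \<phi> \<omega>"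
proof -
  interpret AP: sigma_finite_subalgebra M "gen M X (insert A P)"
    using P A by (intro sigma_finite_subalgebra_gen) blast
  have "AE \<omega> in M. real_cond_exp M (gen M X (insert A P)) J \<omega>
      = Ia \<omega> / \<pi> \<omega> * real_cond_exp M (gen M X (insert A P)) IaY \<omega>"
    unfolding J_eq
  proof (rule AP.real_cond_exp_mult)
    show "(\<lambda>\<omega>. Ia \<omega> / \<pi> \<omega>) \<in> borel_measurable (gen M X (insert A P))"
      using borel_measurable_Ia_gen[of "insert A P"] borel_measurable_propensity_gen[of "insert A P"] P(1)
      by (intro borel_measurable_divide) auto
    show "integrable M (\<lambda>\<omega>. Ia \<omega> / \<pi> \<omega> * IaY \<omega>)"
      using integrable_J unfolding J_eq .
  qed (rule borel_measurable_IaY)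
  with \<phi> show ?thesis by eventually_elim simp
qed

definition cond_exp_ignores_T :: "'v set \<Rightarrow> ('a \<Rightarrow> real) \<Rightarrow> bool" where
  "cond_exp_ignores_T P f \<longleftrightarrow>
     (\<exists>\<phi>\<in>borel_measurable (gen M X (P - T)). AE x in M. real_cond_exp M (gen M X P) f x = \<phi> x)"

lemma cond_exp_ignores_T_V: "cond_exp_ignores_T V IaY"
proof -
  interpret V: sigma_finite_subalgebra M "gen M X V"
    by (rule sigma_finite_subalgebra_gen) simp
  have "IaY \<in> borel_measurable (gen M X (V - T))"
    using A Y A_notin_T Y_notin_T by (intro borel_measurable_IaY_gen) auto
  moreover from this have "AE x in M. real_cond_exp M (gen M X V) IaY x = IaY x"
    by (rule V.real_cond_exp_F_meas[OF integrable_IaY borel_measurable_gen_mono[OF Diff_subset]])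
  ultimately show ?thesis unfolding cond_exp_ignores_T_def by blast
qed

lemma cond_exp_ignores_T_remove:
  assumes P: "ancestral V E P" and v: "v \<in> V" "v \<notin> P" "pa E v \<subseteq> P" "v \<noteq> A"
    and f: "integrable M f" and ign: "cond_exp_ignores_T (insert v P) f"
  shows "cond_exp_ignores_T P f"
proof -
  obtain \<phi> where \<phi>: "\<phi> \<in> borel_measurable (gen M X (insert v P - T))"
      "AE x in M. real_cond_exp M (gen M X (insert v P)) f x = \<phi> x"
    using ign unfolding cond_exp_ignores_T_def by blast
  have PV: "P \<subseteq> V" using P by (simp add: ancestral_def)
  then have vPV: "insert v P \<subseteq> V" using v(1) by blast
  have \<phi>M: "\<phi> \<in> borel_measurable M"
    using borel_measurable_gen_M[OF _ \<phi>(1)] vPV by blast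
  have \<phi>I: "integrable M \<phi>"
    by (rule integrable_real_cond_exp_gen_version[OF vPV f \<phi>(2) \<phi>M])
  have tower: "AE x in M. real_cond_exp M (gen M X P) f x = real_cond_exp M (gen M X P) \<phi> x"
    by (rule real_cond_exp_gen_nested_eq[OF subset_insertI vPV f \<phi>(2) \<phi>M])
  show ?thesis
  proof (cases "v \<in> T")
    case True
    then have \<phi>_PT: "\<phi> \<in> borel_measurable (gen M X (P - T))"
      using \<phi>(1) by (simp add: insert_Diff_if)
    then have "AE x in M. real_cond_exp M (gen M X P) \<phi> x = \<phi> x"
      by (rule sigma_finite_subalgebra.real_cond_exp_F_meas[OF sigma_finite_subalgebra_gen[OF PV] \<phi>I
            borel_measurable_gen_mono[OF Diff_subset]])
    with tower have "AE x in M. real_cond_exp M (gen M X P) f x = \<phi> x"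
      by eventually_elim simp
    with \<phi>_PT show ?thesis unfolding cond_exp_ignores_T_def by blast
  next
    case False
    \<comment> \<open>No parent of v lies in T, so conditioning on P instead of P - T is covered by the
      local Markov property at v.\<close>
    then have \<phi>_vPT: "\<phi> \<in> borel_measurable (gen M X (insert v (P - T)))"
      using \<phi>(1) by (simp add: insert_Diff_if)
    have "pa E v \<subseteq> P - T"
      using pa_disjoint_de_avoiding[OF edges_subset b_neq_A v(1) v(4) False] v(3) by blast
    then have "AE x in M. real_cond_exp M (gen M X P) \<phi> x = real_cond_exp M (gen M X (P - T)) \<phi> x"
      by (rule real_cond_exp_local_markov[OF v(1) _ Diff_subset ancestral_subset_nd[OF P v(2)] \<phi>I \<phi>_vPT])
    with tower have "AE x in M. real_cond_exp M (gen M X P) f x = real_cond_exp M (gen M X (P - T)) \<phi> x"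
      by eventually_elim simp
    then show ?thesis
      unfolding cond_exp_ignores_T_def using borel_measurable_cond_exp by blast
  qed
qed

lemma real_cond_exp_J_remove_A:
  assumes P: "ancestral V E P" "A \<notin> P" "pa E A \<subseteq> P" and g: "g \<in> borel_measurable (gen M X P)"
    and J_AP: "AE \<omega> in M. real_cond_exp M (gen M X (insert A P)) J \<omega> = g \<omega> / \<pi> \<omega> * Ia \<omega>"
  shows "AE \<omega> in M. real_cond_exp M (gen M X P) J \<omega> = g \<omega>"
proof -
  have PV: "P \<subseteq> V" using P(1) by (simp add: ancestral_def)
  then have APV: "insert A P \<subseteq> V" using A by blast
  have [measurable]: "g \<in> borel_measurable M"
    by (rule borel_measurable_gen_M[OF PV g])
  have h_M: "(\<lambda>\<omega>. g \<omega> / \<pi> \<omega> * Ia \<omega>) \<in> borel_measurable M" by measurable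
  have "AE \<omega> in M. real_cond_exp M (gen M X P) J \<omega>
      = real_cond_exp M (gen M X P) (\<lambda>\<omega>. g \<omega> / \<pi> \<omega> * Ia \<omega>) \<omega>"
    by (rule real_cond_exp_gen_nested_eq[OF subset_insertI APV integrable_J J_AP h_M])
  moreover have "AE \<omega> in M. real_cond_exp M (gen M X P) (\<lambda>\<omega>. g \<omega> / \<pi> \<omega> * Ia \<omega>) \<omega>
      = g \<omega> / \<pi> \<omega> * real_cond_exp M (gen M X P) Ia \<omega>"
  proof (rule sigma_finite_subalgebra.real_cond_exp_mult[OF sigma_finite_subalgebra_gen[OF PV]])
    show "(\<lambda>\<omega>. g \<omega> / \<pi> \<omega>) \<in> borel_measurable (gen M X P)"
      using g borel_measurable_propensity_gen[OF P(3)] by (rule borel_measurable_divide)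
    show "integrable M (\<lambda>\<omega>. g \<omega> / \<pi> \<omega> * Ia \<omega>)"
      by (rule integrable_real_cond_exp_gen_version[OF APV integrable_J J_AP h_M])
  qed (rule borel_measurable_Ia)
  \<comment> \<open>The weight 1 / \<pi> cancels against the conditional probability of A = a.\<close>
  moreover note real_cond_exp_Ia_ancestral[OF P]
  ultimately show ?thesis
    using propensity_pos by eventually_elim simp
qed

lemma cond_exp_ignores_T_remove_A:
  assumes P: "ancestral V E P" "A \<notin> P" "pa E A \<subseteq> P"
    and ign: "cond_exp_ignores_T (insert A P) IaY"
  shows "cond_exp_ignores_T P J"
proof -
  have PV: "P \<subseteq> V" using P(1) by (simp add: ancestral_def)
  obtain \<phi> where \<phi>: "\<phi> \<in> borel_measurable (gen M X (insert A (P - T)))"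
      "AE x in M. real_cond_exp M (gen M X (insert A P)) IaY x = \<phi> x"
    using ign A_notin_T unfolding cond_exp_ignores_T_def by (auto simp: insert_Diff_if)
  \<comment> \<open>On the event X A = a the version \<phi> no longer depends on X A.\<close>
  obtain g where g: "g \<in> borel_measurable (gen M X (P - T))"
      "\<And>\<omega>. \<omega> \<in> space M \<Longrightarrow> X A \<omega> = a \<Longrightarrow> \<phi> \<omega> = g \<omega>"
    using borel_measurable_gen_insert_on_level_set[OF \<phi>(1), of a] by blast
  have "AE \<omega> in M. real_cond_exp M (gen M X (insert A P)) J \<omega> = g \<omega> / \<pi> \<omega> * Ia \<omega>"
    using real_cond_exp_J_insert_A[OF P(3) PV \<phi>(2)] AE_space
  proof eventually_elim
    case (elim \<omega>)
    then show ?case using g(2)[of \<omega>] by (simp add: Ia_def split: split_indicator)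
  qed
  then have "AE \<omega> in M. real_cond_exp M (gen M X P) J \<omega> = g \<omega>"
    by (rule real_cond_exp_J_remove_A[OF P borel_measurable_gen_mono[OF Diff_subset g(1)]])
  then show ?thesis
    using g(1) unfolding cond_exp_ignores_T_def by blast
qed

lemma cond_exp_ignores_T_ancestral:
  "ancestral V E P \<Longrightarrow> cond_exp_ignores_T P (if A \<in> P then IaY else J)"
proof (induction "card (V - P)" arbitrary: P rule: less_induct)
  case less
  show ?case
  proof (cases "P = V")
    case True
    then show ?thesis using cond_exp_ignores_T_V A by simp
  next
    case False
    then obtain v where v: "v \<in> V - P" "pa E v \<subseteq> P"
      using ancestral_extend[OF dag less.prems] by blast
    have "card (V - insert v P) < card (V - P)"
      using v(1) dag by (intro psubset_card_mono) (auto simp: is_dag_def)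
    then have IH: "cond_exp_ignores_T (insert v P) (if A \<in> insert v P then IaY else J)"
      using less.hyps ancestral_insert[OF less.prems _ v(2)] v(1) by blast
    show ?thesis
    proof (cases "v = A")
      case True
      then have "A \<notin> P" "pa E A \<subseteq> P" "cond_exp_ignores_T (insert A P) IaY"
        using v IH by auto
      then show ?thesis
        using cond_exp_ignores_T_remove_A[OF less.prems] by simp
    next
      case False
      then show ?thesis
        using cond_exp_ignores_T_remove[OF less.prems _ _ v(2) False] IH v(1) integrable_IaY integrable_J
        by simp
    qed
  qed
qed

lemma real_cond_exp_J_insert_nd:
  "\<exists>\<phi>\<in>borel_measurable (gen M X (nd V E b)).
     AE \<omega> in M. real_cond_exp M (gen M X (insert b (nd V E b))) J \<omega> = \<phi> \<omega>"
proof -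
  have "ancestral V E (insert b (nd V E b))"
    by (rule ancestral_insert[OF ancestral_nd[OF edges_subset] b_V pa_subset_nd[OF dag]])
  moreover have "A \<notin> insert b (nd V E b)"
    using A_de_b b_neq_A by (simp add: nd_def)
  moreover have "insert b (nd V E b) - T = nd V E b"
    using start_in_de_avoiding[of b V E A] de_avoiding_subset_de[of V E A b] by (auto simp: nd_def)
  ultimately show ?thesis
    using cond_exp_ignores_T_ancestral unfolding cond_exp_ignores_T_def by fastforce
qed

lemma real_cond_exp_J_indir:
  "AE \<omega> in M. real_cond_exp M (gen M X (insert b (pa E b))) J \<omega> = real_cond_exp M (gen M X (pa E b)) J \<omega>"
proof -
  obtain \<phi> where \<phi>: "\<phi> \<in> borel_measurable (gen M X (nd V E b))"
      "AE \<omega> in M. real_cond_exp M (gen M X (insert b (nd V E b))) J \<omega> = \<phi> \<omega>"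
    using real_cond_exp_J_insert_nd by blast
  have bNV: "insert b (nd V E b) \<subseteq> V" using b_V nd_subset_V by blast
  have pa_N: "pa E b \<subseteq> nd V E b" by (rule pa_subset_nd[OF dag])
  have \<phi>M: "\<phi> \<in> borel_measurable M"
    by (rule borel_measurable_gen_M[OF nd_subset_V \<phi>(1)])
  have "AE \<omega> in M. real_cond_exp M (gen M X (insert b (pa E b))) J \<omega>
      = real_cond_exp M (gen M X (insert b (pa E b))) \<phi> \<omega>"
    using pa_N by (intro real_cond_exp_gen_nested_eq[OF _ bNV integrable_J \<phi>(2) \<phi>M]) blast
  moreover have "AE \<omega> in M. real_cond_exp M (gen M X (pa E b)) J \<omega> = real_cond_exp M (gen M X (pa E b)) \<phi> \<omega>"
    using pa_N by (intro real_cond_exp_gen_nested_eq[OF _ bNV integrable_J \<phi>(2) \<phi>M]) blast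
  moreover have "AE \<omega> in M. real_cond_exp M (gen M X (insert b (pa E b))) \<phi> \<omega>
      = real_cond_exp M (gen M X (pa E b)) \<phi> \<omega>"
    by (rule real_cond_exp_insert_pa_eq[OF b_V
          integrable_real_cond_exp_gen_version[OF bNV integrable_J \<phi>(2) \<phi>M] \<phi>(1)])
  ultimately show ?thesis by eventually_elim simp
qed

end

theorem proposition3:
  fixes M :: "'a measure" and V :: "'v set" and E :: "('v \<times> 'v) set"
    and X :: "'v \<Rightarrow> 'a \<Rightarrow> real" and A Y Vj :: 'v and a :: real
  assumes "prob_space M"
    and "is_dag V E"
    and "A \<in> V" and "Y \<in> V" and "A \<noteq> Y"
    and "\<And>v. v \<in> V \<Longrightarrow> X v \<in> borel_measurable M"
    and "countable (X A ` space M)"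
    and "local_markov M V E X"
    and "AE \<omega> in M. propensity M E X A a \<omega> > 0"
    and "integrable M (J_fun M E X A a Y)"
    and "Vj \<in> indir V E A Y"
  shows "AE \<omega> in M.
           real_cond_exp M (gen M X (insert Vj (pa E Vj))) (J_fun M E X A a Y) \<omega>
         - real_cond_exp M (gen M X (pa E Vj)) (J_fun M E X A a Y) \<omega> = 0"
proof -
  interpret indir_setting M V E X A Y Vj a
    using assms(1-4,6,8-11)
    by (intro indir_setting.intro bayesian_network.intro bayesian_network_axioms.intro
        indir_setting_axioms.intro)
  show ?thesis
    using real_cond_exp_J_indir by eventually_elim simp
qed

end
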